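(* Let $(W,S)$ be a finite Coxeter system with Poincaré polynomial $P(q)=\sum_{w\in W}q^{\ell(w)}$ and identity $e$, and for $w\in W$ let $g_w(q)=\sum_{\chi\in\operatorname{Irr}(W)}\chi(w)\,d_\chi(q)$, where $d_\chi(q)$ are the generic degrees of $W$. Then $g_e(q)=P(q)$, and $g_s(q)=(1-q)P(q)/(1+q)$ for every $s\in S$.
   Context: Let $W$ be a finite Coxeter group with set of distinguished generators $S$, length function $\ell(\cdot)$, identity $e$, and set of irreducible complex characters $\operatorname{Irr}(W)$. Let $K\subseteq\mathbb{C}$ be a splitting field for $W$, $q$ an indeterminate, and $\mathcal{H}$ the Hecke algebra of $W$ over $K(\sqrt q)$ with basis $T_w$ ($w\in W$) and relations $T_s^2=qT_e+(q-1)T_s$ for $s\in S$, and $T_xT_y=T_{xy}$ whenever $\ell(x)+\ell(y)=\ell(xy)$. $\mathcal{H}$ is split semisimple; each irreducible character $\tilde\chi$ of $\mathcal{H}$ satisfies $\tilde\chi(T_w)\in K[\sqrt q]$, and specializing $\sqrt q\mapsto 1$ in $\tilde\chi(T_w)$ gives $\chi(w)$ for a unique $\chi\in\operatorname{Irr}(W)$, giving a bijection $\chi\leftrightarrow\tilde\chi$. The generic degrees $d_\chi(q)$, $\chi\in\operatorname{Irr}(W)$, are the unique elements satisfying $\sum_{\chi\in\operatorname{Irr}(W)}\tilde\chi(T_w)d_\chi(q)=P(q)$ if $w=e$ and $=0$ if $w\neq e$. *)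

theory Defs
  imports "HOL-Algebra.Multiplicative_Group" "HOL-Algebra.Generated_Groups"
          "HOL-Computational_Algebra.Fraction_Field" "HOL-Computational_Algebra.Polynomial"
          "Jordan_Normal_Form.Matrix"
begin

definition wprod :: "('a, 'b) monoid_scheme \<Rightarrow> 'a list \<Rightarrow> 'a" where
  "wprod G ws = foldr (\<lambda>s acc. s \<otimes>\<^bsub>G\<^esub> acc) ws \<one>\<^bsub>G\<^esub>"

text \<open>The congruence on words over S generated by the Coxeter relations
  (s t)^m(s,t) = 1, where m(s,t) is the order of s t in G (for s = t this is s s = 1).
  W has the Coxeter presentation iff equality in G of word products implies this congruence.\<close>
inductive cox_eq :: "('a, 'b) monoid_scheme \<Rightarrow> 'a set \<Rightarrow> 'a list \<Rightarrow> 'a list \<Rightarrow> bool"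
  for G S where
  refl: "set u \<subseteq> S \<Longrightarrow> cox_eq G S u u"
| sym: "cox_eq G S u v \<Longrightarrow> cox_eq G S v u"
| trans: "cox_eq G S u v \<Longrightarrow> cox_eq G S v w \<Longrightarrow> cox_eq G S u w"
| ctxt: "cox_eq G S u v \<Longrightarrow> set x \<subseteq> S \<Longrightarrow> set y \<subseteq> S \<Longrightarrow> cox_eq G S (x @ u @ y) (x @ v @ y)"
| rel: "s \<in> S \<Longrightarrow> t \<in> S \<Longrightarrow>
        cox_eq G S (concat (replicate (group.ord G (s \<otimes>\<^bsub>G\<^esub> t)) [s, t])) []"

definition coxeter_system :: "('a, 'b) monoid_scheme \<Rightarrow> 'a set \<Rightarrow> bool" where
  "coxeter_system G S \<longleftrightarrow> group G \<and> S \<subseteq> carrier G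
     \<and> (\<forall>s\<in>S. s \<noteq> \<one>\<^bsub>G\<^esub> \<and> s \<otimes>\<^bsub>G\<^esub> s = \<one>\<^bsub>G\<^esub>)
     \<and> generate G S = carrier G
     \<and> (\<forall>u v. set u \<subseteq> S \<longrightarrow> set v \<subseteq> S \<longrightarrow> wprod G u = wprod G v \<longrightarrow> cox_eq G S u v)"

definition cox_len :: "('a, 'b) monoid_scheme \<Rightarrow> 'a set \<Rightarrow> 'a \<Rightarrow> nat" where
  "cox_len G S w = (LEAST n. \<exists>ws. length ws = n \<and> set ws \<subseteq> S \<and> wprod G ws = w)"

definition mtrace :: "'c::comm_monoid_add mat \<Rightarrow> 'c" where
  "mtrace A = (\<Sum>i<dim_row A. A $$ (i, i))"

definition is_subspace :: "nat \<Rightarrow> 'c::field vec set \<Rightarrow> bool" where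
  "is_subspace n U \<longleftrightarrow> U \<subseteq> carrier_vec n \<and> 0\<^sub>v n \<in> U
     \<and> (\<forall>u\<in>U. \<forall>v\<in>U. u + v \<in> U) \<and> (\<forall>c. \<forall>u\<in>U. c \<cdot>\<^sub>v u \<in> U)"

definition irreducible_family :: "nat \<Rightarrow> 'c::field mat set \<Rightarrow> bool" where
  "irreducible_family n M \<longleftrightarrow> n > 0 \<and>
     (\<forall>U. is_subspace n U \<longrightarrow> (\<forall>A\<in>M. \<forall>u\<in>U. A *\<^sub>v u \<in> U)
          \<longrightarrow> U = {0\<^sub>v n} \<or> U = carrier_vec n)"

definition group_rep :: "('a, 'b) monoid_scheme \<Rightarrow> nat \<Rightarrow> ('a \<Rightarrow> complex mat) \<Rightarrow> bool" where
  "group_rep G n \<rho> \<longleftrightarrow> (\<forall>w\<in>carrier G. \<rho> w \<in> carrier_mat n n) \<and> \<rho> \<one>\<^bsub>G\<^esub> = 1\<^sub>m n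
     \<and> (\<forall>x\<in>carrier G. \<forall>y\<in>carrier G. \<rho> (x \<otimes>\<^bsub>G\<^esub> y) = \<rho> x * \<rho> y)"

definition irr_chars :: "('a, 'b) monoid_scheme \<Rightarrow> ('a \<Rightarrow> complex) set" where
  "irr_chars G = {(\<lambda>w. if w \<in> carrier G then mtrace (\<rho> w) else 0) | n \<rho>.
      group_rep G n \<rho> \<and> irreducible_family n (\<rho> ` carrier G)}"

text \<open>Coefficient field: C(v) with v = sqrt q an indeterminate (K = C).\<close>
type_synonym hfield = "complex poly fract"

definition sqrtq :: hfield where "sqrtq = Fract [:0, 1:] 1"
definition qq :: hfield where "qq = sqrtq ^ 2"
definition cst :: "complex \<Rightarrow> hfield" where "cst c = Fract [:c:] 1"

text \<open>A representation of the Hecke algebra H on F^n, given by the images rho w of the basis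
  elements T_w.  Since H is spanned by the T_w and generated by the T_s, and left multiplication
  by T_s on the basis is T_s T_w = T_(sw) if l(sw) > l(w), and q T_(sw) + (q-1) T_w otherwise
  (a consequence of the defining relations), these conditions say exactly that the linear
  extension of rho is a unital algebra homomorphism H -> F^(n x n).\<close>
definition hecke_rep :: "('a, 'b) monoid_scheme \<Rightarrow> 'a set \<Rightarrow> nat \<Rightarrow> ('a \<Rightarrow> hfield mat) \<Rightarrow> bool" where
  "hecke_rep G S n \<rho> \<longleftrightarrow> (\<forall>w\<in>carrier G. \<rho> w \<in> carrier_mat n n) \<and> \<rho> \<one>\<^bsub>G\<^esub> = 1\<^sub>m n
     \<and> (\<forall>s\<in>S. \<forall>w\<in>carrier G. \<rho> s * \<rho> w =
          (if cox_len G S (s \<otimes>\<^bsub>G\<^esub> w) > cox_len G S w then \<rho> (s \<otimes>\<^bsub>G\<^esub> w)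
           else qq \<cdot>\<^sub>m \<rho> (s \<otimes>\<^bsub>G\<^esub> w) + (qq - 1) \<cdot>\<^sub>m \<rho> w))"

text \<open>Irreducible characters of H, recorded as the functions w \<mapsto> chi~(T_w).\<close>
definition hecke_irr_chars :: "('a, 'b) monoid_scheme \<Rightarrow> 'a set \<Rightarrow> ('a \<Rightarrow> hfield) set" where
  "hecke_irr_chars G S = {(\<lambda>w. if w \<in> carrier G then mtrace (\<rho> w) else 0) | n \<rho>.
      hecke_rep G S n \<rho> \<and> irreducible_family n (\<rho> ` carrier G)}"

text \<open>Specialisation sqrt q \<mapsto> 1 of a character with values in C[sqrt q].\<close>
definition specialize :: "('a, 'b) monoid_scheme \<Rightarrow> ('a \<Rightarrow> hfield) \<Rightarrow> ('a \<Rightarrow> complex)" where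
  "specialize G \<psi> = (\<lambda>w. if w \<in> carrier G then poly (THE p. \<psi> w = Fract p 1) 1 else 0)"

definition poincare :: "('a, 'b) monoid_scheme \<Rightarrow> 'a set \<Rightarrow> hfield" where
  "poincare G S = (\<Sum>w\<in>carrier G. qq ^ cox_len G S w)"

definition gfun :: "('a, 'b) monoid_scheme \<Rightarrow> (('a \<Rightarrow> complex) \<Rightarrow> hfield) \<Rightarrow> 'a \<Rightarrow> hfield" where
  "gfun G d w = (\<Sum>\<chi>\<in>irr_chars G. cst (\<chi> w) * d \<chi>)"

end

(*
  On every irreducible representation of the Hecke algebra, T_s satisfies
  (T_s - q)(T_s + 1) = 0. Multiplying the characteristic matrices of T_s and of
  (q - 1) - T_s gives ((x - q)(x + 1))^n times the identity, so the characteristic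
  polynomial of T_s is (x - q)^a (x + 1)^b with a + b = n: the character takes the
  value a q - b at T_s and a + b at T_e, and its specialisation takes the value
  a - b at s. Weighting by the generic degrees, let A and B be the sums of
  a d_chi and b d_chi. The defining relations of the generic degrees at e and at s
  read A + B = P and q A - B = 0, whence g_s = A - B = (1 - q) P / (1 + q).
*)

theory Submission
  imports Defs "Jordan_Normal_Form.Char_Poly"
begin

lemma coeff_prod_linear_factors_length:
  "coeff (\<Prod>c\<leftarrow>cs. [:-c, 1:]) (length cs) = (1 :: 'c::comm_ring_1)"
  by (induction cs) (simp_all add: coeff_eq_0 degree_linear_factors)

lemma coeff_prod_linear_factors_subleading:
  fixes cs :: "'c::comm_ring_1 list"
  assumes "cs \<noteq> []"
  shows "coeff (\<Prod>c\<leftarrow>cs. [:-c, 1:]) (length cs - 1) = - sum_list cs"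
  using assms
proof (induction cs)
  case (Cons c cs)
  show ?case
  proof (cases "cs = []")
    case False
    then obtain k where "length cs = Suc k" by (cases cs) auto
    then show ?thesis using Cons False coeff_prod_linear_factors_length[of cs] by simp
  qed simp
qed simp

lemma poly_decompose_two_roots:
  fixes f :: "'c::idom poly"
  assumes "f \<noteq> 0"
  obtains k m g where "f = [:-\<alpha>, 1:] ^ k * [:-\<beta>, 1:] ^ m * g"
    and "poly g \<alpha> \<noteq> 0" and "poly g \<beta> \<noteq> 0"
proof -
  obtain f1 where f1: "f = [:-\<alpha>, 1:] ^ order \<alpha> f * f1" and not_\<alpha>: "\<not> [:-\<alpha>, 1:] dvd f1"
    using order_decomp[OF assms] by blast
  with assms have "f1 \<noteq> 0" by auto
  obtain g where g: "f1 = [:-\<beta>, 1:] ^ order \<beta> f1 * g" and "\<not> [:-\<beta>, 1:] dvd g"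
    using order_decomp[OF \<open>f1 \<noteq> 0\<close>] by blast
  moreover have "\<not> [:-\<alpha>, 1:] dvd g"
    using not_\<alpha> dvd_mult[of "[:-\<alpha>, 1:]" g] g by metis
  ultimately show ?thesis
    using f1 by (intro that[of "order \<alpha> f" "order \<beta> f1" g]) (simp_all add: mult.assoc poly_eq_0_iff_dvd)
qed

lemma order_two_root_factors:
  fixes g :: "'c::idom poly"
  assumes "\<alpha> \<noteq> \<beta>" and "poly g \<alpha> \<noteq> 0" and "poly g \<beta> \<noteq> 0"
  shows "order \<alpha> ([:-\<alpha>, 1:] ^ k * [:-\<beta>, 1:] ^ m * g) = k"
    and "order \<beta> ([:-\<alpha>, 1:] ^ k * [:-\<beta>, 1:] ^ m * g) = m"
proof -
  have nz: "[:-\<alpha>, 1:] ^ k * [:-\<beta>, 1:] ^ m * g \<noteq> 0"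
    using assms(2) by auto
  have "poly ([:-\<beta>, 1:] ^ m) \<alpha> \<noteq> 0" "poly ([:-\<alpha>, 1:] ^ k) \<beta> \<noteq> 0"
    using assms(1) by (simp_all add: poly_power)
  then have "order \<alpha> ([:-\<beta>, 1:] ^ m) = 0" "order \<alpha> g = 0"
    and "order \<beta> ([:-\<alpha>, 1:] ^ k) = 0" "order \<beta> g = 0"
    using assms(2,3) by (simp_all add: order_0I)
  with nz show "order \<alpha> ([:-\<alpha>, 1:] ^ k * [:-\<beta>, 1:] ^ m * g) = k"
    and "order \<beta> ([:-\<alpha>, 1:] ^ k * [:-\<beta>, 1:] ^ m * g) = m"
    by (simp_all add: order_mult order_power_n_n)
qed

lemma monic_factor_of_two_root_power:
  fixes c d :: "'c::idom poly"
  assumes cd: "c * d = ([:-\<alpha>, 1:] * [:-\<beta>, 1:]) ^ n" and "monic c" and "\<alpha> \<noteq> \<beta>"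
  shows "\<exists>a b. c = [:-\<alpha>, 1:] ^ a * [:-\<beta>, 1:] ^ b"
proof -
  let ?P = "[:-\<alpha>, 1:]" and ?Q = "[:-\<beta>, 1:]"
  have "c * d \<noteq> 0" unfolding cd by simp
  then have "c \<noteq> 0" and "d \<noteq> 0" by auto
  obtain k m g where c: "c = ?P ^ k * ?Q ^ m * g" and g: "poly g \<alpha> \<noteq> 0" "poly g \<beta> \<noteq> 0"
    using poly_decompose_two_roots[OF \<open>c \<noteq> 0\<close>] by metis
  obtain k' m' h where d: "d = ?P ^ k' * ?Q ^ m' * h" and h: "poly h \<alpha> \<noteq> 0" "poly h \<beta> \<noteq> 0"
    using poly_decompose_two_roots[OF \<open>d \<noteq> 0\<close>] by metis
  have "?P ^ (k + k') * ?Q ^ (m + m') * (g * h) = c * d"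
    unfolding c d by (simp add: power_add ac_simps)
  also have "\<dots> = ?P ^ n * ?Q ^ n * 1"
    unfolding cd power_mult_distrib by simp
  finally have eq: "?P ^ (k + k') * ?Q ^ (m + m') * (g * h) = ?P ^ n * ?Q ^ n * 1" .
  have gh: "poly (g * h) \<alpha> \<noteq> 0" "poly (g * h) \<beta> \<noteq> 0"
    using g h by simp_all
  have "k + k' = n" and "m + m' = n"
    using arg_cong[OF eq, of "order \<alpha>"] arg_cong[OF eq, of "order \<beta>"]
      order_two_root_factors[OF \<open>\<alpha> \<noteq> \<beta>\<close> gh] order_two_root_factors[OF \<open>\<alpha> \<noteq> \<beta>\<close>, of 1]
    by simp_all
  then have "g * h = 1" using eq by simp
  then obtain u where "g = [:u:]" using is_unit_poly_iff by (metis dvdI)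
  moreover have "lead_coeff g = 1"
    using \<open>monic c\<close> unfolding c by (simp add: lead_coeff_mult lead_coeff_power)
  ultimately have "g = 1" by (simp add: one_pCons)
  with c show ?thesis by (metis mult_1_right)
qed

lemma card_fixpoints_permutes_le:
  assumes p: "p permutes A" and "finite A" and "p \<noteq> id"
  shows "card {i\<in>A. p i = i} + 2 \<le> card A"
proof -
  obtain i where pi: "p i \<noteq> i" using \<open>p \<noteq> id\<close> by (auto simp: fun_eq_iff)
  then have "i \<in> A" using permutes_not_in[OF p] by blast
  then have "p i \<in> A" using permutes_in_image[OF p] by simp
  have "p (p i) \<noteq> p i" using pi permutes_inj[OF p] by (metis injD)
  then have "card {i\<in>A. p i = i} \<le> card (A - {i, p i})"
    using \<open>finite A\<close> by (intro card_mono) auto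
  moreover have "card (A - {i, p i}) + 2 = card A"
  proof -
    have "{i, p i} \<subseteq> A" and "card {i, p i} = 2"
      using \<open>i \<in> A\<close> \<open>p i \<in> A\<close> pi by simp_all
    then show ?thesis
      using card_Diff_subset[of "{i, p i}" A] card_mono[OF \<open>finite A\<close>, of "{i, p i}"] by simp
  qed
  ultimately show ?thesis by linarith
qed

lemma coeff_char_poly_subleading:
  fixes A :: "'c::comm_ring_1 mat"
  assumes A: "A \<in> carrier_mat n n" and "n > 0"
  shows "coeff (char_poly A) (n - 1) = - mtrace A"
proof -
  define M where "M = char_poly_matrix A"
  have M: "M \<in> carrier_mat n n" using A unfolding M_def by simp
  have M_entry: "M $$ (i, j) = (if i = j then [:- A $$ (i, i), 1:] else [:- A $$ (i, j):])"
    if "i < n" "j < n" for i j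
    using A that unfolding M_def char_poly_matrix_def by simp
  \<comment> \<open>Off-diagonal entries of M are constants and a permutation other than the identity
    moves at least two indices, so only the diagonal term reaches degree n - 1.\<close>
  have "coeff (signof p * (\<Prod>i=0..<n. M $$ (i, p i))) (n - 1) = 0"
    if p: "p permutes {0..<n}" and "p \<noteq> id" for p
  proof -
    have "degree (\<Prod>i=0..<n. M $$ (i, p i)) \<le> (\<Sum>i=0..<n. degree (M $$ (i, p i)))"
      using degree_prod_sum_le[of "{0..<n}" "\<lambda>i. M $$ (i, p i)"] by (simp add: o_def)
    also have "\<dots> \<le> (\<Sum>i=0..<n. of_bool (p i = i))"
      using p by (intro sum_mono) (simp add: M_entry permutes_in_image)
    also have "\<dots> = card {i\<in>{0..<n}. p i = i}"
      by (simp add: Int_def conj_commute)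
    finally have "degree (\<Prod>i=0..<n. M $$ (i, p i)) + 2 \<le> n"
      using card_fixpoints_permutes_le[OF p _ \<open>p \<noteq> id\<close>] by simp
    then show ?thesis by (intro coeff_eq_0) simp
  qed
  then have "coeff (char_poly A) (n - 1) = coeff (\<Prod>i=0..<n. M $$ (i, i)) (n - 1)"
    unfolding char_poly_def M_def[symmetric] det_def'[OF M] coeff_sum
    by (subst sum.remove[of _ id]) (simp_all add: finite_permutations permutes_id)
  also have "(\<Prod>i=0..<n. M $$ (i, i)) = (\<Prod>i=0..<n. [:- A $$ (i, i), 1:])"
    by (rule prod.cong) (simp_all add: M_entry)
  also have "\<dots> = (\<Prod>c\<leftarrow>map (\<lambda>i. A $$ (i, i)) [0..<n]. [:-c, 1:])"
    using prod.distinct_set_conv_list[of "[0..<n]" "\<lambda>i. [:- A $$ (i, i), 1:]"] by (simp add: o_def)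
  also have "coeff \<dots> (n - 1) = - mtrace A"
    using coeff_prod_linear_factors_subleading[of "map (\<lambda>i. A $$ (i, i)) [0..<n]"] A \<open>n > 0\<close>
    by (simp add: mtrace_def sum_list_sum_nth atLeast0LessThan)
  finally show ?thesis .
qed

lemma char_poly_matrix_mult_quadratic:
  fixes X :: "'c::comm_ring_1 mat"
  assumes X: "X \<in> carrier_mat n n"
    and rel: "X * X = (- \<alpha> * \<beta>) \<cdot>\<^sub>m 1\<^sub>m n + (\<alpha> + \<beta>) \<cdot>\<^sub>m X"
  shows "char_poly_matrix X * char_poly_matrix ((\<alpha> + \<beta>) \<cdot>\<^sub>m 1\<^sub>m n - X)
    = ([:-\<alpha>, 1:] * [:-\<beta>, 1:]) \<cdot>\<^sub>m 1\<^sub>m n"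
proof (rule eq_matI)
  fix i j assume "i < dim_row (([:-\<alpha>, 1:] * [:-\<beta>, 1:]) \<cdot>\<^sub>m 1\<^sub>m n)"
    and "j < dim_col (([:-\<alpha>, 1:] * [:-\<beta>, 1:]) \<cdot>\<^sub>m 1\<^sub>m n)"
  then have i: "i < n" and j: "j < n" by simp_all
  \<comment> \<open>Naming the two non-constant polynomials keeps simp from multiplying them out.\<close>
  define x y :: "'c poly" where "x = [:0, 1:]" and "y = [:-(\<alpha> + \<beta>), 1:]"
  have XX: "(\<Sum>k<n. X $$ (i, k) * X $$ (k, j))
      = (if i = j then - \<alpha> * \<beta> else 0) + (\<alpha> + \<beta>) * X $$ (i, j)"
    using arg_cong[OF rel, of "\<lambda>M. M $$ (i, j)"] X i j
    by (simp add: scalar_prod_def lessThan_atLeast0)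
  have "(char_poly_matrix X * char_poly_matrix ((\<alpha> + \<beta>) \<cdot>\<^sub>m 1\<^sub>m n - X)) $$ (i, j)
      = (\<Sum>k<n. ((if i = k then x else 0) - [:X $$ (i, k):]) * ((if k = j then y else 0) + [:X $$ (k, j):]))"
    using X i j unfolding x_def y_def
    by (auto simp: char_poly_matrix_def scalar_prod_def lessThan_atLeast0 algebra_simps intro!: sum.cong)
  also have "\<dots> = (\<Sum>k<n. (if i = k then (if k = j then x * y else 0) else 0)
      + (if i = k then x * [:X $$ (k, j):] else 0) - (if k = j then [:X $$ (i, k):] * y else 0)
      - [:X $$ (i, k) * X $$ (k, j):])"
    by (intro sum.cong) (simp_all add: algebra_simps)
  also have "\<dots> = (if i = j then x * y else 0) + x * [:X $$ (i, j):] - [:X $$ (i, j):] * y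
      - [:\<Sum>k<n. X $$ (i, k) * X $$ (k, j):]"
    using i j by (simp add: sum.distrib sum_subtractf sum_to_poly)
  also have "\<dots> = (([:-\<alpha>, 1:] * [:-\<beta>, 1:]) \<cdot>\<^sub>m 1\<^sub>m n) $$ (i, j)"
    unfolding XX x_def y_def using i j by (simp add: algebra_simps)
  finally show "(char_poly_matrix X * char_poly_matrix ((\<alpha> + \<beta>) \<cdot>\<^sub>m 1\<^sub>m n - X)) $$ (i, j)
      = (([:-\<alpha>, 1:] * [:-\<beta>, 1:]) \<cdot>\<^sub>m 1\<^sub>m n) $$ (i, j)" .
qed (use X in \<open>simp_all add: char_poly_matrix_def\<close>)

lemma char_poly_mult_quadratic:
  fixes X :: "'c::comm_ring_1 mat"
  assumes X: "X \<in> carrier_mat n n"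
    and rel: "X * X = (- \<alpha> * \<beta>) \<cdot>\<^sub>m 1\<^sub>m n + (\<alpha> + \<beta>) \<cdot>\<^sub>m X"
  shows "char_poly X * char_poly ((\<alpha> + \<beta>) \<cdot>\<^sub>m 1\<^sub>m n - X) = ([:-\<alpha>, 1:] * [:-\<beta>, 1:]) ^ n"
proof -
  have "char_poly X * char_poly ((\<alpha> + \<beta>) \<cdot>\<^sub>m 1\<^sub>m n - X)
      = det (char_poly_matrix X * char_poly_matrix ((\<alpha> + \<beta>) \<cdot>\<^sub>m 1\<^sub>m n - X))"
    unfolding char_poly_def using X by (intro det_mult[symmetric, of _ n] char_poly_matrix_closed) auto
  then show ?thesis
    unfolding char_poly_matrix_mult_quadratic[OF X rel] det_smult det_one by simp
qed

lemma mtrace_of_split_char_poly: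
  fixes A :: "'c::comm_ring_1 mat"
  assumes A: "A \<in> carrier_mat n n" and split: "char_poly A = (\<Prod>c\<leftarrow>cs. [:-c, 1:])"
  shows "length cs = n" and "mtrace A = sum_list cs"
proof -
  show "length cs = n"
    using degree_monic_char_poly[OF A] degree_linear_factors[of uminus cs] split by simp
  show "mtrace A = sum_list cs"
  proof (cases "n = 0")
    case True
    then show ?thesis using A \<open>length cs = n\<close> by (simp add: mtrace_def)
  next
    case False
    then show ?thesis
      using coeff_char_poly_subleading[OF A] coeff_prod_linear_factors_subleading[of cs]
        split \<open>length cs = n\<close> by auto
  qed
qed

lemma mtrace_quadratic_relation:
  fixes X :: "'c::idom mat"
  assumes X: "X \<in> carrier_mat n n"
    and rel: "X * X = (- \<alpha> * \<beta>) \<cdot>\<^sub>m 1\<^sub>m n + (\<alpha> + \<beta>) \<cdot>\<^sub>m X" and "\<alpha> \<noteq> \<beta>"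
  obtains a b where "a + b = n" and "mtrace X = of_nat a * \<alpha> + of_nat b * \<beta>"
proof -
  obtain a b where "char_poly X = [:-\<alpha>, 1:] ^ a * [:-\<beta>, 1:] ^ b"
    using monic_factor_of_two_root_power[OF char_poly_mult_quadratic[OF X rel]] degree_monic_char_poly[OF X]
      \<open>\<alpha> \<noteq> \<beta>\<close> by blast
  then have "char_poly X = (\<Prod>c\<leftarrow>replicate a \<alpha> @ replicate b \<beta>. [:-c, 1:])"
    by simp
  from mtrace_of_split_char_poly[OF X this] show ?thesis
    by (intro that[of a b]) (simp_all add: sum_list_replicate)
qed

lemma qq_eq_Fract: "qq = Fract [:0, 0, 1:] 1"
  unfolding qq_def sqrtq_def by (simp add: power2_eq_square)

lemma qq_neq_minus_one: "qq \<noteq> -1"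
proof
  assume "qq = -1"
  then have "Fract [:0, 0, 1:] 1 = Fract (-1) (1 :: complex poly)"
    by (simp add: qq_eq_Fract One_fract_def)
  then have "[:0, 0, 1:] = (-1 :: complex poly)"
    by (simp add: eq_fract)
  then have "coeff [:0, 0, 1:] 2 = coeff (-1 :: complex poly) 2"
    by (rule arg_cong)
  then show False by (simp add: numeral_2_eq_2)
qed

lemma specialize_Fract:
  assumes "w \<in> carrier G" and "\<psi> w = Fract p 1"
  shows "specialize G \<psi> w = poly p 1"
proof -
  have "(THE p'. \<psi> w = Fract p' 1) = p"
    using assms(2) by (rule the_equality) (simp add: assms(2) eq_fract)
  then show ?thesis using assms(1) unfolding specialize_def by simp
qed

lemma specialize_of_nat:
  assumes "w \<in> carrier G" and "\<psi> w = of_nat m"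
  shows "cst (specialize G \<psi> w) = of_nat m"
  using specialize_Fract[OF assms(1)] assms(2)
  by (simp add: of_nat_fract of_nat_poly cst_def)

lemma specialize_linear_in_qq:
  assumes "w \<in> carrier G" and "\<psi> w = of_nat a * qq - of_nat b"
  shows "cst (specialize G \<psi> w) = of_nat a - of_nat b"
proof -
  have "\<psi> w = Fract (of_nat a * [:0, 0, 1:] - of_nat b) 1"
    unfolding assms(2) qq_eq_Fract by (simp add: of_nat_fract)
  then show ?thesis
    using specialize_Fract[OF assms(1)] by (simp add: of_nat_poly cst_def of_nat_fract)
qed

lemma coxeter_system_one_closed:
  assumes "coxeter_system G S"
  shows "\<one>\<^bsub>G\<^esub> \<in> carrier G"
  using assms unfolding coxeter_system_def by (simp add: group.is_monoid monoid.one_closed)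

lemma cox_len_one: "cox_len G S \<one>\<^bsub>G\<^esub> = 0"
  unfolding cox_len_def by (rule Least_eq_0) (rule exI[of _ "[]"], simp add: wprod_def)

lemma hecke_rep_generator_quadratic:
  assumes cox: "coxeter_system G S" and rep: "hecke_rep G S n \<rho>" and s: "s \<in> S"
  shows "\<rho> s * \<rho> s = qq \<cdot>\<^sub>m 1\<^sub>m n + (qq - 1) \<cdot>\<^sub>m \<rho> s"
proof -
  have "s \<in> carrier G" and "s \<otimes>\<^bsub>G\<^esub> s = \<one>\<^bsub>G\<^esub>"
    using cox s unfolding coxeter_system_def by auto
  then show ?thesis
    using rep s unfolding hecke_rep_def by (simp add: cox_len_one)
qed

lemma specialize_hecke_irr_char_one:
  assumes cox: "coxeter_system G S" and "\<psi> \<in> hecke_irr_chars G S"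
  shows "cst (specialize G \<psi> \<one>\<^bsub>G\<^esub>) = \<psi> \<one>\<^bsub>G\<^esub>"
proof -
  obtain n \<rho> where "hecke_rep G S n \<rho>"
      and "\<psi> = (\<lambda>w. if w \<in> carrier G then mtrace (\<rho> w) else 0)"
    using assms(2) unfolding hecke_irr_chars_def by blast
  then have "\<psi> \<one>\<^bsub>G\<^esub> = of_nat n"
    using coxeter_system_one_closed[OF cox] unfolding hecke_rep_def by (simp add: mtrace_def)
  then show ?thesis using specialize_of_nat[OF coxeter_system_one_closed[OF cox]] by simp
qed

lemma hecke_irr_char_at_generator:
  assumes cox: "coxeter_system G S" and "\<psi> \<in> hecke_irr_chars G S" and s: "s \<in> S"
  obtains a b where "\<psi> \<one>\<^bsub>G\<^esub> = of_nat a + of_nat b" and "\<psi> s = of_nat a * qq - of_nat b"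
    and "cst (specialize G \<psi> s) = of_nat a - of_nat b"
proof -
  obtain n \<rho> where rep: "hecke_rep G S n \<rho>"
      and \<psi>: "\<psi> = (\<lambda>w. if w \<in> carrier G then mtrace (\<rho> w) else 0)"
    using assms(2) unfolding hecke_irr_chars_def by blast
  have "s \<in> carrier G" using cox s unfolding coxeter_system_def by auto
  then have "\<rho> s \<in> carrier_mat n n" using rep unfolding hecke_rep_def by simp
  \<comment> \<open>The eigenvalues of T_s are q and -1.\<close>
  moreover have "\<rho> s * \<rho> s = (- qq * -1) \<cdot>\<^sub>m 1\<^sub>m n + (qq + -1) \<cdot>\<^sub>m \<rho> s"
    using hecke_rep_generator_quadratic[OF cox rep s] by simp
  ultimately obtain a b where "a + b = n" and "mtrace (\<rho> s) = of_nat a * qq + of_nat b * -1"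
    using mtrace_quadratic_relation qq_neq_minus_one by metis
  moreover have "\<psi> \<one>\<^bsub>G\<^esub> = of_nat n"
    using coxeter_system_one_closed[OF cox] rep unfolding \<psi> hecke_rep_def by (simp add: mtrace_def)
  ultimately show ?thesis
    using \<open>s \<in> carrier G\<close> specialize_linear_in_qq[OF \<open>s \<in> carrier G\<close>, of \<psi> a b]
    by (intro that[of a b]) (simp_all add: \<psi> flip: \<open>a + b = n\<close>)
qed

lemma sum_two_eigenvalue_weights:
  fixes a b D :: "'i \<Rightarrow> 'f::field"
  assumes at_one: "(\<Sum>i\<in>I. (a i + b i) * D i) = P"
    and at_s: "(\<Sum>i\<in>I. (a i * q - b i) * D i) = 0" and "q \<noteq> -1"
  shows "(\<Sum>i\<in>I. (a i - b i) * D i) = (1 - q) * P / (1 + q)"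
proof -
  define A B where "A = (\<Sum>i\<in>I. a i * D i)" and "B = (\<Sum>i\<in>I. b i * D i)"
  have "B = q * A" and P: "P = (1 + q) * A"
    using at_one at_s
    by (simp_all add: A_def B_def algebra_simps sum.distrib sum_subtractf sum_distrib_left)
  have "1 + q \<noteq> 0" using \<open>q \<noteq> -1\<close> by (metis add.commute add_eq_0_iff)
  have "(\<Sum>i\<in>I. (a i - b i) * D i) = A - B"
    by (simp add: A_def B_def algebra_simps sum_subtractf)
  also have "\<dots> = (1 - q) * A" using \<open>B = q * A\<close> by (simp add: algebra_simps)
  also have "\<dots> = (1 - q) * P / (1 + q)" using \<open>1 + q \<noteq> 0\<close> unfolding P by simp
  finally show ?thesis .
qed

theorem corollary1p2:
  fixes G :: "('a, 'b) monoid_scheme" and S :: "'a set"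
    and d :: "('a \<Rightarrow> complex) \<Rightarrow> hfield"
  assumes cox: "coxeter_system G S"
    and fin: "finite (carrier G)"
    and bij: "bij_betw (specialize G) (hecke_irr_chars G S) (irr_chars G)"
    and gendeg: "\<forall>w\<in>carrier G.
        (\<Sum>\<psi>\<in>hecke_irr_chars G S. \<psi> w * d (specialize G \<psi>))
          = (if w = \<one>\<^bsub>G\<^esub> then poincare G S else 0)"
  shows "gfun G d \<one>\<^bsub>G\<^esub> = poincare G S
       \<and> (\<forall>s\<in>S. gfun G d s = (1 - qq) * poincare G S / (1 + qq))"
proof -
  let ?H = "hecke_irr_chars G S"
  have gfun: "gfun G d w = (\<Sum>\<psi>\<in>?H. cst (specialize G \<psi> w) * d (specialize G \<psi>))" for w
    unfolding gfun_def by (rule sum.reindex_bij_betw[OF bij, symmetric])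
  have one: "\<one>\<^bsub>G\<^esub> \<in> carrier G" by (rule coxeter_system_one_closed[OF cox])
  have "gfun G d \<one>\<^bsub>G\<^esub> = poincare G S"
    using gendeg one specialize_hecke_irr_char_one[OF cox] unfolding gfun by (simp cong: sum.cong)
  moreover have "gfun G d s = (1 - qq) * poincare G S / (1 + qq)" if s: "s \<in> S" for s
  proof -
    have "s \<in> carrier G" and "s \<noteq> \<one>\<^bsub>G\<^esub>" using cox s unfolding coxeter_system_def by auto
    have "\<forall>\<psi>\<in>?H. \<exists>a b. \<psi> \<one>\<^bsub>G\<^esub> = of_nat a + of_nat b \<and> \<psi> s = of_nat a * qq - of_nat b
        \<and> cst (specialize G \<psi> s) = of_nat a - of_nat b"
      using hecke_irr_char_at_generator[OF cox _ s] by metis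
    then obtain a b where ab: "\<forall>\<psi>\<in>?H. \<psi> \<one>\<^bsub>G\<^esub> = of_nat (a \<psi>) + of_nat (b \<psi>)
        \<and> \<psi> s = of_nat (a \<psi>) * qq - of_nat (b \<psi>)
        \<and> cst (specialize G \<psi> s) = of_nat (a \<psi>) - of_nat (b \<psi>)"
      by metis
    have "gfun G d s = (\<Sum>\<psi>\<in>?H. (of_nat (a \<psi>) - of_nat (b \<psi>)) * d (specialize G \<psi>))"
      using ab unfolding gfun by (simp cong: sum.cong)
    also have "\<dots> = (1 - qq) * poincare G S / (1 + qq)"
      using gendeg one \<open>s \<in> carrier G\<close> \<open>s \<noteq> \<one>\<^bsub>G\<^esub>\<close> ab
      by (intro sum_two_eigenvalue_weights[OF _ _ qq_neq_minus_one]) (simp_all cong: sum.cong)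
    finally show ?thesis .
  qed
  ultimately show ?thesis by blast
qed

end
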